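(* Let $a,b,c,d,e,f,k,l,p,q,r,s\ge0$ be integers with $a+b$, $c+d$, $e+f$, $k+l$, $p+q$, $r+s$ positive, and let $$E=\begin{bmatrix} J_{k,a}&-J_{k,b}&J_{k,c}&-J_{k,d}&0&0\\ -J_{l,a}&J_{l,b}&-J_{l,c}&J_{l,d}&0&0\\ J_{p,a}&-J_{p,b}&0&0&J_{p,e}&-J_{p,f}\\ -J_{q,a}&J_{q,b}&0&0&-J_{q,e}&J_{q,f}\\ 0&0&J_{r,c}&-J_{r,d}&-J_{r,e}&J_{r,f}\\ 0&0&-J_{s,c}&J_{s,d}&J_{s,e}&-J_{s,f} \end{bmatrix}$$ with $E\mathbf 1=0$ and $\mathbf 1^TE=0^T$. Then $E$ is realizable if and only if one of the following holds: (i) $a+b$, $c+d$, $e+f$, $k+l$, $p+q$ and $r+s$ are all even; (ii) either $a+b$, $c+d$, $e+f$ are all odd or $k+l$, $p+q$, $r+s$ are all odd, and $\frac{e+f}{k+l}=\frac{c+d}{p+q}=\frac{a+b}{r+s}$.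
   Context: $J_{p,q}$ is the $p\times q$ all-ones matrix. Two $(0,1)$ matrices $A,B$ are Gram mates if $AA^T=BB^T$, $A^TA=B^TB$ and $A\neq B$. A $(0,1,-1)$ matrix $E$ with $E\mathbf 1=0$, $\mathbf 1^TE=0^T$ is realizable if there is a $(0,1)$ matrix $A$ such that $A$ and $A+E$ are Gram mates. *)

theory Defs
  imports "Jordan_Normal_Form.Matrix"
begin

definition zero_one_mat :: "int mat \<Rightarrow> bool" where
  "zero_one_mat A \<longleftrightarrow> (\<forall>i<dim_row A. \<forall>j<dim_col A. A $$ (i,j) \<in> {0,1})"

definition gram_mates :: "int mat \<Rightarrow> int mat \<Rightarrow> bool" where
  "gram_mates A B \<longleftrightarrow> zero_one_mat A \<and> zero_one_mat B \<and>
     dim_row A = dim_row B \<and> dim_col A = dim_col B \<and>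
     A * transpose_mat A = B * transpose_mat B \<and>
     transpose_mat A * A = transpose_mat B * B \<and> A \<noteq> B"

definition realizable :: "int mat \<Rightarrow> bool" where
  "realizable E \<longleftrightarrow> (\<exists>A \<in> carrier_mat (dim_row E) (dim_col E). gram_mates A (A + E))"

fun blk :: "nat list \<Rightarrow> nat \<Rightarrow> nat" where
  "blk [] i = 0"
| "blk (x # xs) i = (if i < x then 0 else Suc (blk xs (i - x)))"

text \<open>Sign pattern of the 6x6 block matrix (block (u,v) is sign * all-ones matrix).\<close>
definition sign_pattern :: "int list list" where
  "sign_pattern =
    [[ 1, -1,  1, -1,  0,  0],
     [-1,  1, -1,  1,  0,  0],
     [ 1, -1,  0,  0,  1, -1],
     [-1,  1,  0,  0, -1,  1],
     [ 0,  0,  1, -1, -1,  1],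
     [ 0,  0, -1,  1,  1, -1]]"

definition E_mat :: "nat \<Rightarrow> nat \<Rightarrow> nat \<Rightarrow> nat \<Rightarrow> nat \<Rightarrow> nat \<Rightarrow>
                     nat \<Rightarrow> nat \<Rightarrow> nat \<Rightarrow> nat \<Rightarrow> nat \<Rightarrow> nat \<Rightarrow> int mat" where
  "E_mat a b c d e f k l p q r s =
     mat (k+l+p+q+r+s) (a+b+c+d+e+f)
       (\<lambda>(i,j). sign_pattern ! blk [k,l,p,q,r,s] i ! blk [a,b,c,d,e,f] j)"

end

theory Submission
  imports Defs
begin

(* Put F = 2 A - J + E. Then A and A + E are (0,1) matrices exactly when F is +-1 on the zero
   entries of E and 0 on the others, and, since E has zero line sums, the two Gram conditions say
   that F E^T and F^T E are skew-symmetric.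

   The zero entries of the block matrix E form three blocks: rows k,l against columns e,f, rows
   p,q against columns c,d and rows r,s against columns a,b. After multiplying F by the +-1 signs
   of the row and column blocks, skew-symmetry says exactly that the three resulting +-1 matrices
   have one common row sum alpha and one common column sum beta.

   A +-1 matrix with n rows, m columns, row sums alpha and column sums beta has n alpha = m beta,
   alpha has the parity of m and beta that of n. For the three zero blocks this gives conditions
   (i) and (ii).
   Conversely, circulant +-1 patterns of period 2 in case (i), and of the odd period N when the
   block has size N Y x N X in case (ii), realise them. *)

section \<open>Gram mates and complementary sign matrices\<close>

definition skew_prod :: "(nat \<Rightarrow> nat \<Rightarrow> int) \<Rightarrow> int mat \<Rightarrow> bool" where
  "skew_prod F E \<longleftrightarrow> (\<forall>i<dim_row E. \<forall>i'<dim_row E.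
     (\<Sum>j<dim_col E. F i j * E $$ (i',j) + F i' j * E $$ (i,j)) = 0)"

definition complementary_signs :: "(nat \<Rightarrow> nat \<Rightarrow> int) \<Rightarrow> int mat \<Rightarrow> bool" where
  "complementary_signs F E \<longleftrightarrow> (\<forall>i<dim_row E. \<forall>j<dim_col E.
     if E $$ (i,j) = 0 then F i j \<in> {-1,1} else F i j = 0)"

lemma mult_transpose_defect:
  fixes A E :: "int mat"
  assumes A: "A \<in> carrier_mat n m" and E: "E \<in> carrier_mat n m"
    and rows: "\<And>i. i < n \<Longrightarrow> (\<Sum>j<m. E $$ (i,j)) = 0"
    and F: "\<And>i j. i < n \<Longrightarrow> j < m \<Longrightarrow> 2 * A $$ (i,j) = 1 + F i j - E $$ (i,j)"
    and i: "i < n" "i' < n"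
  shows "2 * (((A + E) * (A + E)\<^sup>T) $$ (i,i') - (A * A\<^sup>T) $$ (i,i'))
    = (\<Sum>j<m. F i j * E $$ (i',j) + F i' j * E $$ (i,j))"
proof -
  have pointwise: "2 * ((A $$ (i,j) + E $$ (i,j)) * (A $$ (i',j) + E $$ (i',j)) - A $$ (i,j) * A $$ (i',j))
      = F i j * E $$ (i',j) + F i' j * E $$ (i,j) + E $$ (i,j) + E $$ (i',j)" if "j < m" for j
  proof -
    have "2 * ((A $$ (i,j) + E $$ (i,j)) * (A $$ (i',j) + E $$ (i',j)) - A $$ (i,j) * A $$ (i',j))
        = (2 * A $$ (i,j)) * E $$ (i',j) + E $$ (i,j) * (2 * A $$ (i',j)) + 2 * E $$ (i,j) * E $$ (i',j)"
      by (simp add: algebra_simps)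
    then show ?thesis
      using F[OF i(1) that] F[OF i(2) that] by (simp add: algebra_simps)
  qed
  have "((A + E) * (A + E)\<^sup>T) $$ (i,i') = (\<Sum>j<m. (A $$ (i,j) + E $$ (i,j)) * (A $$ (i',j) + E $$ (i',j)))"
    and "(A * A\<^sup>T) $$ (i,i') = (\<Sum>j<m. A $$ (i,j) * A $$ (i',j))"
    using A E i by (simp_all add: scalar_prod_def lessThan_atLeast0)
  then have "2 * (((A + E) * (A + E)\<^sup>T) $$ (i,i') - (A * A\<^sup>T) $$ (i,i'))
      = (\<Sum>j<m. 2 * ((A $$ (i,j) + E $$ (i,j)) * (A $$ (i',j) + E $$ (i',j)) - A $$ (i,j) * A $$ (i',j)))"
    by (simp add: sum_subtractf sum_distrib_left)
  also have "\<dots> = (\<Sum>j<m. F i j * E $$ (i',j) + F i' j * E $$ (i,j) + E $$ (i,j) + E $$ (i',j))"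
    using pointwise by (intro sum.cong) auto
  also have "\<dots> = (\<Sum>j<m. F i j * E $$ (i',j) + F i' j * E $$ (i,j))"
    using rows[OF i(1)] rows[OF i(2)] by (simp add: sum.distrib)
  finally show ?thesis .
qed

lemma mult_transpose_eq_iff_skew_prod:
  fixes A E :: "int mat"
  assumes A: "A \<in> carrier_mat n m" and E: "E \<in> carrier_mat n m"
    and rows: "\<And>i. i < n \<Longrightarrow> (\<Sum>j<m. E $$ (i,j)) = 0"
    and F: "\<And>i j. i < n \<Longrightarrow> j < m \<Longrightarrow> 2 * A $$ (i,j) = 1 + F i j - E $$ (i,j)"
  shows "(A + E) * (A + E)\<^sup>T = A * A\<^sup>T \<longleftrightarrow> skew_prod F E"
proof
  assume eq: "(A + E) * (A + E)\<^sup>T = A * A\<^sup>T"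
  show "skew_prod F E"
    unfolding skew_prod_def carrier_matD[OF E]
  proof (intro allI impI)
    fix i i' assume i: "i < n" "i' < n"
    show "(\<Sum>j<m. F i j * E $$ (i',j) + F i' j * E $$ (i,j)) = 0"
      using mult_transpose_defect[OF A E rows F i] eq by simp
  qed
next
  assume skew: "skew_prod F E"
  have "((A + E) * (A + E)\<^sup>T) $$ (i,i') = (A * A\<^sup>T) $$ (i,i')" if i: "i < n" "i' < n" for i i'
  proof -
    have "(\<Sum>j<m. F i j * E $$ (i',j) + F i' j * E $$ (i,j)) = 0"
      using skew i unfolding skew_prod_def carrier_matD[OF E] by blast
    then show ?thesis
      using mult_transpose_defect[OF A E rows F i] by simp
  qed
  then show "(A + E) * (A + E)\<^sup>T = A * A\<^sup>T"
    using A E by (intro eq_matI) auto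
qed

lemma transpose_mult_eq_iff_skew_prod:
  fixes A E :: "int mat"
  assumes A: "A \<in> carrier_mat n m" and E: "E \<in> carrier_mat n m"
    and cols: "\<And>j. j < m \<Longrightarrow> (\<Sum>i<n. E $$ (i,j)) = 0"
    and F: "\<And>i j. i < n \<Longrightarrow> j < m \<Longrightarrow> 2 * A $$ (i,j) = 1 + F i j - E $$ (i,j)"
  shows "(A + E)\<^sup>T * (A + E) = A\<^sup>T * A \<longleftrightarrow> skew_prod (\<lambda>j i. F i j) E\<^sup>T"
proof -
  have "(A\<^sup>T + E\<^sup>T) * (A\<^sup>T + E\<^sup>T)\<^sup>T = A\<^sup>T * A\<^sup>T\<^sup>T \<longleftrightarrow> skew_prod (\<lambda>j i. F i j) E\<^sup>T"
    by (rule mult_transpose_eq_iff_skew_prod) (use A E cols F in auto)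
  then show ?thesis
    using A E by (simp add: transpose_add)
qed

lemma zero_one_pair_iff:
  fixes a e f :: int
  assumes "2 * a = 1 + f - e" and "e \<in> {-1,0,1}"
  shows "a \<in> {0,1} \<and> a + e \<in> {0,1} \<longleftrightarrow> (if e = 0 then f \<in> {-1,1} else f = 0)"
  using assms by auto

lemma mult_vec_ones_eq_0_iff:
  fixes A :: "int mat"
  assumes "A \<in> carrier_mat n m"
  shows "A *\<^sub>v vec m (\<lambda>_. 1) = 0\<^sub>v n \<longleftrightarrow> (\<forall>i<n. (\<Sum>j<m. A $$ (i,j)) = 0)"
proof -
  have "(A *\<^sub>v vec m (\<lambda>_. 1)) $ i = (\<Sum>j<m. A $$ (i,j))" if "i < n" for i
    using assms that by (simp add: scalar_prod_def lessThan_atLeast0)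
  then show ?thesis
    using assms by (auto simp: vec_eq_iff)
qed

lemma gram_mates_iff_complementary_skew:
  fixes A E :: "int mat"
  assumes A: "A \<in> carrier_mat n m" and E: "E \<in> carrier_mat n m" and "E \<noteq> 0\<^sub>m n m"
    and entries: "\<And>i j. i < n \<Longrightarrow> j < m \<Longrightarrow> E $$ (i,j) \<in> {-1,0,1}"
    and rows: "\<And>i. i < n \<Longrightarrow> (\<Sum>j<m. E $$ (i,j)) = 0"
    and cols: "\<And>j. j < m \<Longrightarrow> (\<Sum>i<n. E $$ (i,j)) = 0"
    and F: "\<And>i j. i < n \<Longrightarrow> j < m \<Longrightarrow> 2 * A $$ (i,j) = 1 + F i j - E $$ (i,j)"
  shows "gram_mates A (A + E) \<longleftrightarrow>
    complementary_signs F E \<and> skew_prod F E \<and> skew_prod (\<lambda>j i. F i j) E\<^sup>T"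
proof -
  have "zero_one_mat A \<and> zero_one_mat (A + E) \<longleftrightarrow>
      (\<forall>i<n. \<forall>j<m. A $$ (i,j) \<in> {0,1} \<and> A $$ (i,j) + E $$ (i,j) \<in> {0,1})"
    using A E unfolding zero_one_mat_def by auto
  also have "\<dots> \<longleftrightarrow> complementary_signs F E"
    using A E F entries zero_one_pair_iff unfolding complementary_signs_def by auto
  moreover have "A \<noteq> A + E"
  proof
    assume eq: "A = A + E"
    have "E $$ (i,j) = 0" if "i < n" "j < m" for i j
    proof -
      have "A $$ (i,j) = (A + E) $$ (i,j)" using eq by (rule arg_cong)
      then show ?thesis using A E that by simp
    qed
    then have "E = 0\<^sub>m n m"
      using E by (intro eq_matI) auto
    then show False using \<open>E \<noteq> 0\<^sub>m n m\<close> by blast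
  qed
  ultimately show ?thesis
    using A E mult_transpose_eq_iff_skew_prod[OF A E rows F]
      transpose_mult_eq_iff_skew_prod[OF A E cols F]
    unfolding gram_mates_def by auto
qed

lemma realizable_iff_complementary_signs:
  fixes E :: "int mat"
  assumes E: "E \<in> carrier_mat n m" and nonzero: "E \<noteq> 0\<^sub>m n m"
    and entries: "\<And>i j. i < n \<Longrightarrow> j < m \<Longrightarrow> E $$ (i,j) \<in> {-1,0,1}"
    and row_sums: "E *\<^sub>v vec m (\<lambda>_. 1) = 0\<^sub>v n"
    and col_sums: "E\<^sup>T *\<^sub>v vec n (\<lambda>_. 1) = 0\<^sub>v m"
  shows "realizable E \<longleftrightarrow>
    (\<exists>F. complementary_signs F E \<and> skew_prod F E \<and> skew_prod (\<lambda>j i. F i j) E\<^sup>T)"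
proof -
  have rows: "(\<Sum>j<m. E $$ (i,j)) = 0" if "i < n" for i
    using row_sums that mult_vec_ones_eq_0_iff[OF E] by blast
  have "(\<Sum>i<n. E\<^sup>T $$ (j,i)) = 0" if "j < m" for j
    using col_sums that mult_vec_ones_eq_0_iff[of "E\<^sup>T" m n] E by auto
  then have cols: "(\<Sum>i<n. E $$ (i,j)) = 0" if "j < m" for j
    using E that by simp
  note gram_mates_iff = gram_mates_iff_complementary_skew[OF _ E nonzero entries rows cols]
  show ?thesis
  proof
    assume "realizable E"
    then obtain A where A: "A \<in> carrier_mat n m" and "gram_mates A (A + E)"
      using E unfolding realizable_def by auto
    then show "\<exists>F. complementary_signs F E \<and> skew_prod F E \<and> skew_prod (\<lambda>j i. F i j) E\<^sup>T"
      using gram_mates_iff[OF A, of "\<lambda>i j. 2 * A $$ (i,j) - 1 + E $$ (i,j)"] by auto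
  next
    assume "\<exists>F. complementary_signs F E \<and> skew_prod F E \<and> skew_prod (\<lambda>j i. F i j) E\<^sup>T"
    then obtain F where F: "complementary_signs F E" "skew_prod F E" "skew_prod (\<lambda>j i. F i j) E\<^sup>T"
      by blast
    define A where "A = mat n m (\<lambda>(i,j). (1 + F i j - E $$ (i,j)) div 2)"
    have A: "A \<in> carrier_mat n m" by (simp add: A_def)
    have "2 * A $$ (i,j) = 1 + F i j - E $$ (i,j)" if "i < n" "j < m" for i j
    proof -
      have "if E $$ (i,j) = 0 then F i j \<in> {-1,1} else F i j = 0"
        using F(1) E that unfolding complementary_signs_def by (simp del: insert_iff)
      then have "even (1 + F i j - E $$ (i,j))"
        using entries[OF that] by (auto split: if_splits)
      then show ?thesis
        using that by (simp add: A_def)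
    qed
    then show "realizable E"
      using gram_mates_iff[OF A] F A E unfolding realizable_def by auto
  qed
qed

section \<open>Plus-minus-one matrices with constant line sums\<close>

definition pm_line_sums :: "(nat \<Rightarrow> nat \<Rightarrow> int) \<Rightarrow> nat set \<Rightarrow> nat set \<Rightarrow> int \<Rightarrow> int \<Rightarrow> bool" where
  "pm_line_sums W I J \<alpha> \<beta> \<longleftrightarrow> (\<forall>i\<in>I. \<forall>j\<in>J. W i j \<in> {-1, 1}) \<and>
     (\<forall>i\<in>I. (\<Sum>j\<in>J. W i j) = \<alpha>) \<and> (\<forall>j\<in>J. (\<Sum>i\<in>I. W i j) = \<beta>)"

lemma pm_line_sums_swap: "pm_line_sums (\<lambda>j i. W i j) J I \<beta> \<alpha> \<longleftrightarrow> pm_line_sums W I J \<alpha> \<beta>"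
  unfolding pm_line_sums_def by auto

lemma pm_line_sums_card:
  assumes "pm_line_sums W I J \<alpha> \<beta>" "finite I" "finite J"
  shows "int (card I) * \<alpha> = int (card J) * \<beta>"
proof -
  have "int (card I) * \<alpha> = (\<Sum>i\<in>I. \<Sum>j\<in>J. W i j)"
    using assms(1) unfolding pm_line_sums_def by simp
  also have "\<dots> = (\<Sum>j\<in>J. \<Sum>i\<in>I. W i j)"
    by (rule sum.swap)
  also have "\<dots> = int (card J) * \<beta>"
    using assms(1) unfolding pm_line_sums_def by simp
  finally show ?thesis .
qed

lemma pm_line_sums_odd_iff:
  assumes "pm_line_sums W I J \<alpha> \<beta>" "I \<noteq> {}"
  shows "odd \<alpha> \<longleftrightarrow> odd (card J)"
proof -
  obtain i where i: "i \<in> I" using assms(2) by blast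
  have "\<alpha> + int (card J) = (\<Sum>j\<in>J. W i j + 1)"
    using assms(1) i unfolding pm_line_sums_def by (simp add: sum.distrib)
  also have "even \<dots>"
  proof (rule dvd_sum)
    fix j assume "j \<in> J"
    then have "W i j \<in> {-1, 1}"
      using assms(1) i unfolding pm_line_sums_def by blast
    then show "even (W i j + 1)" by auto
  qed
  finally show ?thesis by simp
qed

lemma sum_periodic_window:
  fixes P :: "nat \<Rightarrow> 'a::cancel_comm_monoid_add"
  assumes "\<And>y. P (y + g) = P y"
  shows "(\<Sum>y\<in>{u..<u + g}. P y) = (\<Sum>y<g. P y)"
proof (induction u)
  case 0
  then show ?case by (simp add: atLeast0LessThan)
next
  case (Suc u)
  have "P u + (\<Sum>y\<in>{Suc u..<Suc u + g}. P y) = (\<Sum>y\<in>{u..<Suc (u + g)}. P y)"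
    by (subst sum.atLeast_Suc_lessThan) simp_all
  also have "\<dots> = (\<Sum>y\<in>{u..<u + g}. P y) + P (u + g)"
    by (rule sum.atLeastLessThan_Suc) simp
  also have "\<dots> = P u + (\<Sum>y<g. P y)"
    using Suc.IH assms[of u] by (simp only: add.commute[of "sum P _"])
  finally show ?case
    by (rule add_left_imp_eq)
qed

lemma sum_periodic:
  fixes P :: "nat \<Rightarrow> 'a::semiring_1_cancel"
  assumes "\<And>y. P (y + g) = P y"
  shows "(\<Sum>y\<in>{u..<u + g * q}. P y) = of_nat q * (\<Sum>y<g. P y)"
proof (induction q)
  case 0
  then show ?case by simp
next
  case (Suc q)
  have "{u..<u + g * Suc q} = {u..<u + g * q} \<union> {u + g * q..<u + g * q + g}"
    by auto
  then have "(\<Sum>y\<in>{u..<u + g * Suc q}. P y) = (\<Sum>y\<in>{u..<u + g * q}. P y) + (\<Sum>y<g. P y)"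
    using sum_periodic_window[of P g, OF assms] by (simp add: sum.union_disjoint)
  then show ?case
    using Suc by (simp add: algebra_simps)
qed

lemma sum_pm_threshold:
  assumes "h \<le> g"
  shows "(\<Sum>z<g. if z < h then 1 else -1 :: int) = 2 * int h - int g"
  using assms
proof (induction g)
  case 0
  then show ?case by simp
next
  case (Suc g)
  then show ?case
    by (cases "h = Suc g") (simp_all add: lessThan_Suc)
qed

lemma pm_line_sums_circulant:
  assumes "0 < g"
  shows "pm_line_sums (\<lambda>i j. if (i + j) mod g < (g + 1) div 2 then 1 else -1)
    {u..<u + g * q} {v..<v + g * q'} (int (q' * (g mod 2))) (int (q * (g mod 2)))"
proof -
  define w :: "nat \<Rightarrow> int" where "w z = (if z < (g + 1) div 2 then 1 else -1)" for z
  have row_sum: "(\<Sum>j\<in>{v..<v + g * q'}. w ((i + j) mod g)) = int (q' * (g mod 2))" for i v q'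
  proof -
    have "(\<Sum>j\<in>{v..<v + g * q'}. w ((i + j) mod g)) = (\<Sum>j\<in>{v..<v + g * q'}. w ((j + i) mod g))"
      by (simp add: add.commute)
    also have "\<dots> = (\<Sum>j\<in>{v + i..<v + g * q' + i}. w (j mod g))"
      by (rule sum.shift_bounds_nat_ivl[symmetric])
    also have "\<dots> = (\<Sum>j\<in>{v + i..<v + i + g * q'}. w (j mod g))"
      by (simp add: ac_simps)
    also have "\<dots> = int q' * (\<Sum>z<g. w (z mod g))"
      by (rule sum_periodic) simp
    also have "(\<Sum>z<g. w (z mod g)) = 2 * int ((g + 1) div 2) - int g"
      unfolding w_def by (simp add: sum_pm_threshold)
    also have "\<dots> = int (g mod 2)"
      by (cases "even g") (auto elim!: evenE oddE)
    finally show ?thesis by simp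
  qed
  have "pm_line_sums (\<lambda>i j. w ((i + j) mod g)) {u..<u + g * q} {v..<v + g * q'}
      (int (q' * (g mod 2))) (int (q * (g mod 2)))"
    unfolding pm_line_sums_def using row_sum[of _ v q'] row_sum[of _ u q]
    by (auto simp: w_def add.commute)
  then show ?thesis
    by (simp add: w_def)
qed

lemma less_3_cases: "(x::nat) < 3 \<longleftrightarrow> x = 0 \<or> x = 1 \<or> x = 2"
  by auto

lemma all_less_3: "(\<forall>x<3. P x) \<longleftrightarrow> P 0 \<and> P 1 \<and> P (2::nat)"
  unfolding less_3_cases by auto

lemma coprime_ratio_multiple:
  fixes X Y a b :: nat
  assumes "coprime X Y" "0 < X" "a * Y = b * X"
  shows "\<exists>N. a = N * X \<and> b = N * Y"
proof -
  have "X dvd a * Y"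
    using assms(3) by simp
  then have "X dvd a"
    using assms(1) by (simp add: coprime_dvd_mult_left_iff)
  then obtain N where a: "a = N * X"
    by (metis dvdE mult.commute)
  then have "b = N * Y"
    using assms(2,3) by (simp add: ac_simps)
  with a show ?thesis by blast
qed

lemma of_nat_ratio_eq_iff:
  fixes a b c d :: nat
  assumes "0 < b" "0 < d"
  shows "(of_nat a / of_nat b :: rat) = of_nat c / of_nat d \<longleftrightarrow> a * d = c * b"
proof -
  have "(of_nat a / of_nat b :: rat) = of_nat c / of_nat d \<longleftrightarrow> of_nat (a * d) = (of_nat (c * b) :: rat)"
    using assms by (simp add: field_simps)
  then show ?thesis
    by (simp only: of_nat_eq_iff)
qed

(* Conditions (i) and (ii) of the theorem for three zero blocks of sizes n x by m x. *)

definition admissible_sizes :: "(nat \<Rightarrow> nat) \<Rightarrow> (nat \<Rightarrow> nat) \<Rightarrow> bool" where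
  "admissible_sizes n m \<longleftrightarrow>
    (\<forall>x<3. even (m x)) \<and> (\<forall>x<3. even (n x)) \<or>
    ((\<forall>x<3. odd (m x)) \<or> (\<forall>x<3. odd (n x))) \<and>
    (of_nat (m 0) / of_nat (n 0) :: rat) = of_nat (m 1) / of_nat (n 1) \<and>
    (of_nat (m 1) / of_nat (n 1) :: rat) = of_nat (m 2) / of_nat (n 2)"

lemma line_sums_imp_admissible_sizes:
  fixes n m :: "nat \<Rightarrow> nat" and \<alpha> \<beta> :: int
  assumes pos: "\<And>x. x < 3 \<Longrightarrow> 0 < n x" "\<And>x. x < 3 \<Longrightarrow> 0 < m x"
    and sums: "\<And>x. x < 3 \<Longrightarrow> int (n x) * \<alpha> = int (m x) * \<beta>"
    and odd_\<alpha>: "\<And>x. x < 3 \<Longrightarrow> odd \<alpha> \<longleftrightarrow> odd (m x)"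
    and odd_\<beta>: "\<And>x. x < 3 \<Longrightarrow> odd \<beta> \<longleftrightarrow> odd (n x)"
  shows "admissible_sizes n m"
proof (cases "even \<alpha> \<and> even \<beta>")
  case True
  then show ?thesis
    unfolding admissible_sizes_def using odd_\<alpha> odd_\<beta> by blast
next
  case False
  then have "\<beta> \<noteq> 0"
    using sums[of 0] pos[of 0] by auto
  then have "(of_nat (m x) / of_nat (n x) :: rat) = of_int \<alpha> / of_int \<beta>" if x: "x < 3" for x
  proof -
    have "of_nat (n x) * (of_int \<alpha> :: rat) = of_nat (m x) * of_int \<beta>"
      using arg_cong[OF sums[OF x], of "of_int :: int \<Rightarrow> rat"] by simp
    then show ?thesis
      using pos[OF x] \<open>\<beta> \<noteq> 0\<close> by (simp add: frac_eq_eq mult.commute)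
  qed
  moreover have "(\<forall>x<3. odd (m x)) \<or> (\<forall>x<3. odd (n x))"
    using False odd_\<alpha> odd_\<beta> by blast
  ultimately show ?thesis
    unfolding admissible_sizes_def by (simp add: all_less_3)
qed

lemma proportional_sizes_factor:
  fixes n m :: "nat \<Rightarrow> nat"
  assumes pos: "\<And>x. x < 3 \<Longrightarrow> 0 < n x" "\<And>x. x < 3 \<Longrightarrow> 0 < m x"
    and ratio: "\<And>x. x < 3 \<Longrightarrow> (of_nat (m x) / of_nat (n x) :: rat) = of_nat (m 0) / of_nat (n 0)"
  obtains X Y where "0 < X" "\<And>x. x < 3 \<Longrightarrow> \<exists>N. m x = N * X \<and> n x = N * Y"
proof -
  have pos0: "0 < n 0" "0 < m 0"
    by (simp_all add: pos)
  define d where "d = gcd (m 0) (n 0)"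
  define X where "X = m 0 div d"
  define Y where "Y = n 0 div d"
  have d: "m 0 = d * X" "n 0 = d * Y" "0 < d"
    using pos0 by (simp_all add: d_def X_def Y_def)
  have coprime: "coprime X Y"
    unfolding X_def Y_def d_def by (rule div_gcd_coprime) (use pos0 in auto)
  have "0 < X" using d pos0 by (cases X) auto
  moreover have "\<exists>N. m x = N * X \<and> n x = N * Y" if x: "x < 3" for x
  proof -
    have "m x * n 0 = m 0 * n x"
      using ratio[OF x] of_nat_ratio_eq_iff[OF pos(1)[OF x] pos0(1)] by simp
    then have "m x * Y = n x * X"
      using d by (simp add: ac_simps)
    then show ?thesis
      using coprime_ratio_multiple[OF coprime \<open>0 < X\<close>] by blast
  qed
  ultimately show ?thesis
    by (rule that)
qed

lemma admissible_sizes_imp_line_sums: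
  fixes n m u v :: "nat \<Rightarrow> nat"
  assumes pos: "\<And>x. x < 3 \<Longrightarrow> 0 < n x" "\<And>x. x < 3 \<Longrightarrow> 0 < m x"
    and "admissible_sizes n m"
  shows "\<exists>\<alpha> \<beta>. \<forall>x<3. \<exists>W. pm_line_sums W {u x..<u x + n x} {v x..<v x + m x} \<alpha> \<beta>"
  using \<open>admissible_sizes n m\<close> unfolding admissible_sizes_def
proof
  assume even: "(\<forall>x<3. even (m x)) \<and> (\<forall>x<3. even (n x))"
  have "pm_line_sums (\<lambda>i j. if (i + j) mod 2 < 1 then 1 else -1)
      {u x..<u x + n x} {v x..<v x + m x} 0 0" if "x < 3" for x
    using pm_line_sums_circulant[of 2 "u x" "n x div 2" "v x" "m x div 2"] even that by simp
  then show ?thesis by blast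
next
  assume odd: "((\<forall>x<3. odd (m x)) \<or> (\<forall>x<3. odd (n x))) \<and>
    (of_nat (m 0) / of_nat (n 0) :: rat) = of_nat (m 1) / of_nat (n 1) \<and>
    (of_nat (m 1) / of_nat (n 1) :: rat) = of_nat (m 2) / of_nat (n 2)"
  have ratio: "(of_nat (m x) / of_nat (n x) :: rat) = of_nat (m 0) / of_nat (n 0)" if "x < 3" for x
    using odd that unfolding less_3_cases by auto
  obtain X Y where "0 < X" and factor: "\<And>x. x < 3 \<Longrightarrow> \<exists>N. m x = N * X \<and> n x = N * Y"
    using proportional_sizes_factor[of n m, OF pos ratio] by blast
  have "\<exists>W. pm_line_sums W {u x..<u x + n x} {v x..<v x + m x} (int X) (int Y)"
    if x: "x < 3" for x
  proof -
    obtain N where N: "m x = N * X" "n x = N * Y"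
      using factor[OF x] by blast
    have "odd (m x) \<or> odd (n x)"
      using odd x by blast
    then have "odd N"
      using N by auto
    then have "0 < N" "N mod 2 = 1"
      by (auto simp: odd_iff_mod_2_eq_one intro: odd_pos)
    then show ?thesis
      using pm_line_sums_circulant[of N "u x" Y "v x" X] N by auto
  qed
  then show ?thesis by blast
qed

lemma pm_line_sums_intervals_iff:
  fixes n m u v :: "nat \<Rightarrow> nat"
  assumes pos: "\<And>x. x < 3 \<Longrightarrow> 0 < n x" "\<And>x. x < 3 \<Longrightarrow> 0 < m x"
  shows "(\<exists>\<alpha> \<beta>. \<forall>x<3. \<exists>W. pm_line_sums W {u x..<u x + n x} {v x..<v x + m x} \<alpha> \<beta>)
    \<longleftrightarrow> admissible_sizes n m"
proof
  assume "\<exists>\<alpha> \<beta>. \<forall>x<3. \<exists>W. pm_line_sums W {u x..<u x + n x} {v x..<v x + m x} \<alpha> \<beta>"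
  then obtain \<alpha> \<beta> where "\<forall>x. \<exists>W. x < 3 \<longrightarrow>
      pm_line_sums W {u x..<u x + n x} {v x..<v x + m x} \<alpha> \<beta>"
    by blast
  from choice[OF this] obtain W where W: "\<And>x. x < 3 \<Longrightarrow>
      pm_line_sums (W x) {u x..<u x + n x} {v x..<v x + m x} \<alpha> \<beta>"
    by blast
  show "admissible_sizes n m"
  proof (rule line_sums_imp_admissible_sizes[OF pos])
    fix x :: nat assume x: "x < 3"
    show "int (n x) * \<alpha> = int (m x) * \<beta>"
      using pm_line_sums_card[OF W[OF x]] by simp
    show "odd \<alpha> \<longleftrightarrow> odd (m x)"
      using pm_line_sums_odd_iff[OF W[OF x]] pos[OF x] by simp
    show "odd \<beta> \<longleftrightarrow> odd (n x)"
      using pm_line_sums_odd_iff[OF pm_line_sums_swap[THEN iffD2, OF W[OF x]]] pos[OF x] by simp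
  qed
qed (rule admissible_sizes_imp_line_sums[OF pos])

section \<open>Pairs of consecutive blocks\<close>

lemma blk_less_iff: "i < sum_list xs \<Longrightarrow> blk xs i < t \<longleftrightarrow> i < sum_list (take t xs)"
proof (induction xs arbitrary: i t)
  case Nil
  then show ?case by simp
next
  case (Cons x xs)
  show ?case
  proof (cases t)
    case 0
    then show ?thesis by simp
  next
    case (Suc t')
    show ?thesis
    proof (cases "i < x")
      case True
      then show ?thesis using Suc by simp
    next
      case False
      then have "i - x < sum_list xs"
        using Cons.prems by simp
      then show ?thesis
        using Cons.IH[of "i - x" t'] False Suc by auto
    qed
  qed
qed

lemma blk_less_length: "i < sum_list xs \<Longrightarrow> blk xs i < length xs"
  by (simp add: blk_less_iff)

definition pair_blk :: "nat list \<Rightarrow> nat \<Rightarrow> nat" where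
  "pair_blk xs i = blk xs i div 2"

definition pair_block :: "nat list \<Rightarrow> nat \<Rightarrow> nat set" where
  "pair_block xs x = {i. i < sum_list xs \<and> pair_blk xs i = x}"

definition pair_start :: "nat list \<Rightarrow> nat \<Rightarrow> nat" where
  "pair_start xs x = sum_list (take (2 * x) xs)"

definition pair_size :: "nat list \<Rightarrow> nat \<Rightarrow> nat" where
  "pair_size xs x = xs ! (2 * x) + xs ! (2 * x + 1)"

lemma pair_block_eq_interval:
  assumes "2 * x + 2 \<le> length xs"
  shows "pair_block xs x = {pair_start xs x..<pair_start xs x + pair_size xs x}"
proof -
  have take: "sum_list (take (2 * x + 2) xs) = sum_list (take (2 * x) xs) + (xs ! (2 * x) + xs ! (2 * x + 1))"
  proof -
    have "take (Suc (Suc (2 * x))) xs = take (2 * x) xs @ [xs ! (2 * x), xs ! Suc (2 * x)]"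
      using assms by (simp add: take_Suc_conv_app_nth)
    then show ?thesis by simp
  qed
  have "sum_list (take (2 * x + 2) xs) + sum_list (drop (2 * x + 2) xs) = sum_list xs"
    by (simp flip: sum_list_append)
  then have bound: "sum_list (take (2 * x + 2) xs) \<le> sum_list xs"
    by linarith
  have "i \<in> pair_block xs x \<longleftrightarrow>
      \<not> i < sum_list (take (2 * x) xs) \<and> i < sum_list (take (2 * x + 2) xs)" for i
  proof (cases "i < sum_list xs")
    case True
    have "pair_blk xs i = x \<longleftrightarrow> \<not> blk xs i < 2 * x \<and> blk xs i < 2 * x + 2"
      unfolding pair_blk_def by linarith
    then show ?thesis
      using True by (simp add: pair_block_def blk_less_iff)
  next
    case False
    then show ?thesis
      using bound unfolding pair_block_def by simp
  qed
  then show ?thesis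
    unfolding pair_start_def pair_size_def take[symmetric] by (simp add: set_eq_iff not_less)
qed

section \<open>The block sign matrix\<close>

definition pair_pattern :: "nat \<Rightarrow> nat \<Rightarrow> int" where
  "pair_pattern x y = [[1, 1, 0], [1, 0, 1], [0, 1, -1]] ! x ! y"

lemma less_6_cases: "(u::nat) < 6 \<longleftrightarrow> u = 0 \<or> u = 1 \<or> u = 2 \<or> u = 3 \<or> u = 4 \<or> u = 5"
  by auto

lemma sign_pattern_kronecker:
  "u < 6 \<Longrightarrow> v < 6 \<Longrightarrow>
    sign_pattern ! u ! v = (-1) ^ u * (-1) ^ v * pair_pattern (u div 2) (v div 2)"
  unfolding less_6_cases by (elim disjE) (simp_all add: sign_pattern_def pair_pattern_def)

lemma pair_pattern_eq_0_iff: "x < 3 \<Longrightarrow> y < 3 \<Longrightarrow> pair_pattern x y = 0 \<longleftrightarrow> x + y = 2"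
  unfolding less_3_cases by (elim disjE) (simp_all add: pair_pattern_def)

lemma pair_pattern_values: "x < 3 \<Longrightarrow> y < 3 \<Longrightarrow> pair_pattern x y \<in> {-1, 0, 1}"
  unfolding less_3_cases by (elim disjE) (simp_all add: pair_pattern_def)

lemma pair_pattern_commute: "x < 3 \<Longrightarrow> y < 3 \<Longrightarrow> pair_pattern y x = pair_pattern x y"
  unfolding less_3_cases by (elim disjE) (simp_all add: pair_pattern_def)

(* For x <> y one has pair_pattern y (2 - x) * pair_pattern x (2 - y) = - (-1) ^ x * (-1) ^ y. *)

lemma pair_pattern_balance:
  fixes P Q :: int
  assumes "x < 3" "y < 3"
  shows "pair_pattern y (2 - x) * (-1) ^ x * P + pair_pattern x (2 - y) * (-1) ^ y * Q = 0
    \<longleftrightarrow> x = y \<or> P = Q"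
  using assms unfolding less_3_cases by (elim disjE) (auto simp: pair_pattern_def)

lemma constant_if_equal_across_classes:
  assumes across: "\<And>i i'. i \<in> S \<Longrightarrow> i' \<in> S \<Longrightarrow> g i = g i' \<or> f i = f i'"
    and "i\<^sub>0 \<in> S" "i\<^sub>1 \<in> S" "g i\<^sub>0 \<noteq> g i\<^sub>1" "i \<in> S"
  shows "f i = f i\<^sub>0"
proof (cases "g i = g i\<^sub>0")
  case True
  then have "f i = f i\<^sub>1"
    using across[OF \<open>i \<in> S\<close> \<open>i\<^sub>1 \<in> S\<close>] \<open>g i\<^sub>0 \<noteq> g i\<^sub>1\<close> by auto
  also have "\<dots> = f i\<^sub>0"
    using across[OF \<open>i\<^sub>1 \<in> S\<close> \<open>i\<^sub>0 \<in> S\<close>] \<open>g i\<^sub>0 \<noteq> g i\<^sub>1\<close> by auto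
  finally show ?thesis .
next
  case False
  then show ?thesis
    using across[OF \<open>i \<in> S\<close> \<open>i\<^sub>0 \<in> S\<close>] by auto
qed

lemma minus_one_power_2_diff: "x < 3 \<Longrightarrow> (-1) ^ (2 - x) = ((-1) ^ x :: int)"
  unfolding less_3_cases by auto

lemma minus_one_powers_cancel:
  "(-1) ^ a * (-1) ^ b * (-1) ^ c * ((-1) ^ a * (-1) ^ b * (-1) ^ c * w) = (w :: int)"
proof -
  have "(-1) ^ a * (-1) ^ b * (-1) ^ c * ((-1) ^ a * (-1) ^ b * (-1) ^ c * w)
      = ((-1) ^ a * (-1) ^ a) * ((-1) ^ b * (-1) ^ b) * ((-1) ^ c * (-1) ^ c) * (w :: int)"
    by (simp only: ac_simps)
  then show ?thesis
    by (simp only: minus_one_mult_self mult_1)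
qed

lemma minus_one_powers_mult_pm:
  "w \<in> {-1, 1} \<Longrightarrow> (-1) ^ a * (-1) ^ b * (-1) ^ c * w \<in> {-1, 1 :: int}"
  by (auto simp: minus_one_power_iff)

definition sign_block_mat :: "nat list \<Rightarrow> nat list \<Rightarrow> int mat" where
  "sign_block_mat rs cs =
     mat (sum_list rs) (sum_list cs) (\<lambda>(i,j). sign_pattern ! blk rs i ! blk cs j)"

definition signed_row_sum :: "nat list \<Rightarrow> nat list \<Rightarrow> (nat \<Rightarrow> nat \<Rightarrow> int) \<Rightarrow> nat \<Rightarrow> int" where
  "signed_row_sum rs cs F i =
     (-1) ^ blk rs i * (-1) ^ pair_blk rs i * (\<Sum>j<sum_list cs. (-1) ^ blk cs j * F i j)"

definition signed_fill :: "nat list \<Rightarrow> nat list \<Rightarrow> (nat \<Rightarrow> nat \<Rightarrow> nat \<Rightarrow> int) \<Rightarrow> nat \<Rightarrow> nat \<Rightarrow> int" where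
  "signed_fill rs cs W i j =
     (if pair_blk rs i + pair_blk cs j = 2
      then (-1) ^ blk rs i * (-1) ^ pair_blk rs i * (-1) ^ blk cs j * W (pair_blk rs i) i j
      else 0)"

definition antidiagonal_supported :: "nat list \<Rightarrow> nat list \<Rightarrow> (nat \<Rightarrow> nat \<Rightarrow> int) \<Rightarrow> bool" where
  "antidiagonal_supported rs cs F \<longleftrightarrow>
     (\<forall>i<sum_list rs. \<forall>j<sum_list cs. pair_blk rs i + pair_blk cs j \<noteq> 2 \<longrightarrow> F i j = 0)"

lemma antidiagonal_supported_swap:
  "antidiagonal_supported cs rs (\<lambda>j i. F i j) \<longleftrightarrow> antidiagonal_supported rs cs F"
  unfolding antidiagonal_supported_def by (auto simp: add.commute)

lemma antidiagonal_supported_signed_fill: "antidiagonal_supported rs cs (signed_fill rs cs W)"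
  by (simp add: antidiagonal_supported_def signed_fill_def)

lemma sign_block_mat_carrier: "sign_block_mat rs cs \<in> carrier_mat (sum_list rs) (sum_list cs)"
  by (simp add: sign_block_mat_def)

lemma pair_blk_less_3: "length xs = 6 \<Longrightarrow> i < sum_list xs \<Longrightarrow> pair_blk xs i < 3"
  using blk_less_length[of i xs] by (simp add: pair_blk_def)

lemma sum_pair_block:
  assumes "\<And>j. j < sum_list xs \<Longrightarrow> pair_blk xs j \<noteq> y \<Longrightarrow> f j = 0"
  shows "(\<Sum>j<sum_list xs. f j) = (\<Sum>j\<in>pair_block xs y. f j)"
  by (rule sum.mono_neutral_right) (use assms in \<open>auto simp: pair_block_def\<close>)

definition valid_block_sizes :: "nat list \<Rightarrow> bool" where
  "valid_block_sizes xs \<longleftrightarrow> length xs = 6 \<and> (\<forall>x<3. 0 < pair_size xs x)"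

lemma pair_block_nonempty: "valid_block_sizes xs \<Longrightarrow> x < 3 \<Longrightarrow> pair_block xs x \<noteq> {}"
  by (simp add: valid_block_sizes_def pair_block_eq_interval)

lemma sign_block_mat_entry:
  assumes "length rs = 6" "length cs = 6" "i < sum_list rs" "j < sum_list cs"
  shows "sign_block_mat rs cs $$ (i,j) =
    (-1) ^ blk rs i * (-1) ^ blk cs j * pair_pattern (pair_blk rs i) (pair_blk cs j)"
proof -
  have "blk rs i < 6" "blk cs j < 6"
    using assms blk_less_length[of i rs] blk_less_length[of j cs] by simp_all
  moreover have "sign_block_mat rs cs $$ (i,j) = sign_pattern ! blk rs i ! blk cs j"
    using assms by (simp add: sign_block_mat_def)
  ultimately show ?thesis
    unfolding pair_blk_def by (simp only: sign_pattern_kronecker)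
qed

lemma sign_block_mat_eq_0_iff:
  "length rs = 6 \<Longrightarrow> length cs = 6 \<Longrightarrow> i < sum_list rs \<Longrightarrow> j < sum_list cs \<Longrightarrow>
    sign_block_mat rs cs $$ (i,j) = 0 \<longleftrightarrow> pair_blk rs i + pair_blk cs j = 2"
  by (simp add: sign_block_mat_entry pair_pattern_eq_0_iff pair_blk_less_3)

lemma sign_block_mat_values:
  assumes "length rs = 6" "length cs = 6" "i < sum_list rs" "j < sum_list cs"
  shows "sign_block_mat rs cs $$ (i,j) \<in> {-1, 0, 1}"
proof -
  have "(-1) ^ blk rs i * (-1) ^ blk cs j \<in> {-1, 1::int}"
    by (auto simp: minus_one_power_iff)
  then show ?thesis
    using pair_pattern_values[OF pair_blk_less_3[OF assms(1,3)] pair_blk_less_3[OF assms(2,4)]]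
      sign_block_mat_entry[OF assms]
    by auto
qed

lemma sign_block_mat_nonzero:
  assumes "valid_block_sizes rs" "valid_block_sizes cs"
  shows "sign_block_mat rs cs \<noteq> 0\<^sub>m (sum_list rs) (sum_list cs)"
proof -
  obtain i j where "i \<in> pair_block rs 0" "j \<in> pair_block cs 0"
    using pair_block_nonempty[OF assms(1), of 0] pair_block_nonempty[OF assms(2), of 0] by auto
  then have "i < sum_list rs" "j < sum_list cs" "sign_block_mat rs cs $$ (i,j) \<noteq> 0"
    using assms by (simp_all add: pair_block_def sign_block_mat_eq_0_iff valid_block_sizes_def)
  then show ?thesis by auto
qed

lemma complementary_signs_iff:
  assumes "length rs = 6" "length cs = 6"
  shows "complementary_signs F (sign_block_mat rs cs) \<longleftrightarrow> (\<forall>i<sum_list rs. \<forall>j<sum_list cs.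
     if pair_blk rs i + pair_blk cs j = 2 then F i j \<in> {-1, 1} else F i j = 0)"
  unfolding complementary_signs_def carrier_matD[OF sign_block_mat_carrier]
  using assms by (simp add: sign_block_mat_eq_0_iff)

lemma row_sum_eq_signed_row_sum:
  "(\<Sum>j<sum_list cs. (-1) ^ blk cs j * F i j) =
    (-1) ^ blk rs i * (-1) ^ pair_blk rs i * signed_row_sum rs cs F i"
proof -
  let ?\<phi> = "\<Sum>j<sum_list cs. (-1) ^ blk cs j * F i j"
  have "(-1) ^ blk rs i * (-1) ^ pair_blk rs i * ((-1) ^ blk rs i * (-1) ^ pair_blk rs i * ?\<phi>)
      = ((-1) ^ blk rs i * (-1) ^ blk rs i) * ((-1) ^ pair_blk rs i * (-1) ^ pair_blk rs i) * (?\<phi> :: int)"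
    by (simp only: ac_simps)
  then show ?thesis
    unfolding signed_row_sum_def by (simp only: minus_one_mult_self mult_1)
qed

lemma cross_sum_eq_signed_row_sum:
  assumes rs: "length rs = 6" and cs: "length cs = 6"
    and supp: "antidiagonal_supported rs cs F"
    and i: "i < sum_list rs" "i' < sum_list rs"
  shows "(\<Sum>j<sum_list cs. F i j * sign_block_mat rs cs $$ (i',j)) =
    (-1) ^ blk rs i' * pair_pattern (pair_blk rs i') (2 - pair_blk rs i) *
    ((-1) ^ blk rs i * (-1) ^ pair_blk rs i * signed_row_sum rs cs F i)"
  unfolding row_sum_eq_signed_row_sum[symmetric] sum_distrib_left
proof (rule sum.cong)
  fix j assume "j \<in> {..<sum_list cs}"
  then have j: "j < sum_list cs" by simp
  show "F i j * sign_block_mat rs cs $$ (i',j) =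
      (-1) ^ blk rs i' * pair_pattern (pair_blk rs i') (2 - pair_blk rs i) * ((-1) ^ blk cs j * F i j)"
  proof (cases "pair_blk rs i + pair_blk cs j = 2")
    case True
    then have "pair_blk cs j = 2 - pair_blk rs i" by simp
    then show ?thesis using sign_block_mat_entry[OF rs cs i(2) j] by simp
  next
    case False
    then show ?thesis using supp i(1) j by (simp add: antidiagonal_supported_def)
  qed
qed simp

lemma skew_prod_iff_signed_row_sum_const:
  assumes rs: "valid_block_sizes rs" and cs: "length cs = 6"
    and supp: "antidiagonal_supported rs cs F"
  shows "skew_prod F (sign_block_mat rs cs) \<longleftrightarrow>
    (\<exists>\<alpha>. \<forall>i<sum_list rs. signed_row_sum rs cs F i = \<alpha>)"
proof -
  let ?E = "sign_block_mat rs cs" and ?R = "pair_blk rs" and ?\<Phi> = "signed_row_sum rs cs F"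
  have rs6: "length rs = 6"
    using rs by (simp add: valid_block_sizes_def)
  have pair_iff: "(\<Sum>j<sum_list cs. F i j * ?E $$ (i',j) + F i' j * ?E $$ (i,j)) = 0 \<longleftrightarrow>
      ?R i = ?R i' \<or> ?\<Phi> i = ?\<Phi> i'" if i: "i < sum_list rs" "i' < sum_list rs" for i i'
  proof -
    have "(\<Sum>j<sum_list cs. F i j * ?E $$ (i',j) + F i' j * ?E $$ (i,j)) =
        (-1) ^ blk rs i * (-1) ^ blk rs i' *
        (pair_pattern (?R i') (2 - ?R i) * (-1) ^ ?R i * ?\<Phi> i +
         pair_pattern (?R i) (2 - ?R i') * (-1) ^ ?R i' * ?\<Phi> i')"
      unfolding sum.distrib cross_sum_eq_signed_row_sum[OF rs6 cs supp i]
        cross_sum_eq_signed_row_sum[OF rs6 cs supp i(2,1)]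
      by (simp add: algebra_simps)
    then show ?thesis
      using pair_pattern_balance[OF pair_blk_less_3 pair_blk_less_3, OF rs6 i(1) rs6 i(2)] by simp
  qed
  have "skew_prod F ?E \<longleftrightarrow> (\<forall>i<sum_list rs. \<forall>i'<sum_list rs. ?R i = ?R i' \<or> ?\<Phi> i = ?\<Phi> i')"
    unfolding skew_prod_def carrier_matD[OF sign_block_mat_carrier] using pair_iff by blast
  also have "\<dots> \<longleftrightarrow> (\<exists>\<alpha>. \<forall>i<sum_list rs. ?\<Phi> i = \<alpha>)"
  proof
    assume across: "\<forall>i<sum_list rs. \<forall>i'<sum_list rs. ?R i = ?R i' \<or> ?\<Phi> i = ?\<Phi> i'"
    obtain i\<^sub>0 i\<^sub>1 where "i\<^sub>0 \<in> pair_block rs 0" "i\<^sub>1 \<in> pair_block rs 1"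
      using pair_block_nonempty[OF rs, of 0] pair_block_nonempty[OF rs, of 1] by auto
    then have i01: "i\<^sub>0 \<in> {..<sum_list rs}" "i\<^sub>1 \<in> {..<sum_list rs}" "?R i\<^sub>0 \<noteq> ?R i\<^sub>1"
      by (simp_all add: pair_block_def)
    have "?\<Phi> i = ?\<Phi> i\<^sub>0" if "i < sum_list rs" for i
      by (rule constant_if_equal_across_classes[where g = ?R, OF _ i01]) (use across that in auto)
    then show "\<exists>\<alpha>. \<forall>i<sum_list rs. ?\<Phi> i = \<alpha>" by blast
  qed auto
  finally show ?thesis .
qed

lemma block_row_sum:
  assumes rs: "length rs = 6" and supp: "antidiagonal_supported rs cs F"
    and i: "i \<in> pair_block rs x"
  shows "(\<Sum>j\<in>pair_block cs (2 - x). (-1) ^ blk rs i * (-1) ^ x * (-1) ^ blk cs j * F i j)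
    = signed_row_sum rs cs F i"
proof -
  have i': "i < sum_list rs" "pair_blk rs i = x"
    using i by (simp_all add: pair_block_def)
  have "(\<Sum>j<sum_list cs. (-1) ^ blk cs j * F i j) =
      (\<Sum>j\<in>pair_block cs (2 - pair_blk rs i). (-1) ^ blk cs j * F i j)"
    by (rule sum_pair_block)
      (use supp i' pair_blk_less_3[OF rs i'(1)] in \<open>auto simp: antidiagonal_supported_def\<close>)
  then have "signed_row_sum rs cs F i =
      (-1) ^ blk rs i * (-1) ^ x * (\<Sum>j\<in>pair_block cs (2 - x). (-1) ^ blk cs j * F i j)"
    unfolding signed_row_sum_def i'(2) by simp
  then show ?thesis
    by (simp add: sum_distrib_left mult.assoc)
qed

lemma complementary_signs_signed_fill:
  assumes rs: "length rs = 6" and cs: "length cs = 6"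
    and W: "\<And>x. x < 3 \<Longrightarrow> pm_line_sums (W x) (pair_block rs x) (pair_block cs (2 - x)) \<alpha> \<beta>"
  shows "complementary_signs (signed_fill rs cs W) (sign_block_mat rs cs)"
  unfolding complementary_signs_iff[OF rs cs]
proof (intro allI impI)
  fix i j assume ij: "i < sum_list rs" "j < sum_list cs"
  then have "i \<in> pair_block rs (pair_blk rs i)" "pair_blk rs i < 3"
    by (simp_all add: pair_block_def pair_blk_less_3[OF rs])
  moreover have "j \<in> pair_block cs (2 - pair_blk rs i)" if "pair_blk rs i + pair_blk cs j = 2"
    using ij that by (auto simp: pair_block_def)
  ultimately show "if pair_blk rs i + pair_blk cs j = 2 then signed_fill rs cs W i j \<in> {-1, 1}
      else signed_fill rs cs W i j = 0"
    using W minus_one_powers_mult_pm unfolding pm_line_sums_def signed_fill_def by auto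
qed

lemma signed_row_sum_signed_fill:
  assumes rs: "length rs = 6"
    and W: "\<And>x. x < 3 \<Longrightarrow> pm_line_sums (W x) (pair_block rs x) (pair_block cs (2 - x)) \<alpha> \<beta>"
    and i: "i < sum_list rs"
  shows "signed_row_sum rs cs (signed_fill rs cs W) i = \<alpha>"
proof -
  let ?x = "pair_blk rs i"
  have x: "?x < 3" "i \<in> pair_block rs ?x"
    using i pair_blk_less_3[OF rs] by (auto simp: pair_block_def)
  have "signed_row_sum rs cs (signed_fill rs cs W) i = (\<Sum>j\<in>pair_block cs (2 - ?x).
      (-1) ^ blk rs i * (-1) ^ ?x * (-1) ^ blk cs j * signed_fill rs cs W i j)"
    by (rule block_row_sum[OF rs antidiagonal_supported_signed_fill x(2), symmetric])
  also have "\<dots> = (\<Sum>j\<in>pair_block cs (2 - ?x). W ?x i j)"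
    using x by (intro sum.cong) (auto simp: pair_block_def signed_fill_def minus_one_powers_cancel)
  also have "\<dots> = \<alpha>"
    using W x unfolding pm_line_sums_def by blast
  finally show ?thesis .
qed

lemma transpose_sign_block_mat:
  assumes rs: "length rs = 6" and cs: "length cs = 6"
  shows "(sign_block_mat rs cs)\<^sup>T = sign_block_mat cs rs"
proof (rule eq_matI)
  fix j i assume "j < dim_row (sign_block_mat cs rs)" "i < dim_col (sign_block_mat cs rs)"
  then have ji: "j < sum_list cs" "i < sum_list rs"
    by (simp_all add: sign_block_mat_def)
  then have "(sign_block_mat rs cs)\<^sup>T $$ (j,i) = sign_block_mat rs cs $$ (i,j)"
    by (simp add: sign_block_mat_def)
  also have "\<dots> = sign_block_mat cs rs $$ (j,i)"
    using sign_block_mat_entry[OF rs cs ji(2,1)] sign_block_mat_entry[OF cs rs ji]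
      pair_pattern_commute[OF pair_blk_less_3[OF rs ji(2)] pair_blk_less_3[OF cs ji(1)]]
    by simp
  finally show "(sign_block_mat rs cs)\<^sup>T $$ (j,i) = sign_block_mat cs rs $$ (j,i)" .
qed (simp_all add: sign_block_mat_def)

lemma pm_line_sums_signed_block:
  assumes rs: "length rs = 6" and cs: "length cs = 6"
    and F: "complementary_signs F (sign_block_mat rs cs)"
    and \<alpha>: "\<And>i. i < sum_list rs \<Longrightarrow> signed_row_sum rs cs F i = \<alpha>"
    and \<beta>: "\<And>j. j < sum_list cs \<Longrightarrow> signed_row_sum cs rs (\<lambda>j i. F i j) j = \<beta>"
    and x: "x < 3"
  shows "pm_line_sums (\<lambda>i j. (-1) ^ blk rs i * (-1) ^ x * (-1) ^ blk cs j * F i j)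
    (pair_block rs x) (pair_block cs (2 - x)) \<alpha> \<beta>"
proof -
  have supp: "antidiagonal_supported rs cs F"
    using F by (simp add: complementary_signs_iff[OF rs cs] antidiagonal_supported_def)
  show ?thesis
    unfolding pm_line_sums_def
  proof (intro conjI ballI)
    fix i j assume i: "i \<in> pair_block rs x" and j: "j \<in> pair_block cs (2 - x)"
    then have ij: "i < sum_list rs" "j < sum_list cs" "pair_blk rs i + pair_blk cs j = 2"
      using x by (auto simp: pair_block_def)
    then have "if pair_blk rs i + pair_blk cs j = 2 then F i j \<in> {-1, 1} else F i j = 0"
      using F unfolding complementary_signs_iff[OF rs cs] by blast
    with ij(3) have "F i j \<in> {-1, 1}"
      by simp
    then show "(-1) ^ blk rs i * (-1) ^ x * (-1) ^ blk cs j * F i j \<in> {-1, 1}"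
      by (rule minus_one_powers_mult_pm)
  next
    fix i assume i: "i \<in> pair_block rs x"
    then show "(\<Sum>j\<in>pair_block cs (2 - x). (-1) ^ blk rs i * (-1) ^ x * (-1) ^ blk cs j * F i j) = \<alpha>"
      using \<alpha> block_row_sum[OF rs supp i] by (simp add: pair_block_def)
  next
    fix j assume j: "j \<in> pair_block cs (2 - x)"
    have "(\<Sum>i\<in>pair_block rs x. (-1) ^ blk rs i * (-1) ^ x * (-1) ^ blk cs j * F i j) =
        (\<Sum>i\<in>pair_block rs (2 - (2 - x)). (-1) ^ blk cs j * (-1) ^ (2 - x) * (-1) ^ blk rs i * F i j)"
      using x by (simp add: minus_one_power_2_diff ac_simps)
    also have "\<dots> = signed_row_sum cs rs (\<lambda>j i. F i j) j"
      using block_row_sum[OF cs antidiagonal_supported_swap[THEN iffD2, OF supp] j]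
      by (simp add: add.commute)
    also have "\<dots> = \<beta>"
      using \<beta> j by (simp add: pair_block_def)
    finally show "(\<Sum>i\<in>pair_block rs x. (-1) ^ blk rs i * (-1) ^ x * (-1) ^ blk cs j * F i j) = \<beta>" .
  qed
qed

lemma signed_column_sum_signed_fill:
  assumes cs: "length cs = 6"
    and W: "\<And>x. x < 3 \<Longrightarrow> pm_line_sums (W x) (pair_block rs x) (pair_block cs (2 - x)) \<alpha> \<beta>"
    and j: "j < sum_list cs"
  shows "signed_row_sum cs rs (\<lambda>j i. signed_fill rs cs W i j) j = \<beta>"
proof -
  let ?C = "pair_blk cs j"
  let ?x = "2 - ?C"
  have x: "?x < 3" "j \<in> pair_block cs ?C" "?C < 3"
    using j pair_blk_less_3[OF cs j] by (auto simp: pair_block_def)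
  have "signed_row_sum cs rs (\<lambda>j i. signed_fill rs cs W i j) j = (\<Sum>i\<in>pair_block rs ?x.
      (-1) ^ blk cs j * (-1) ^ ?C * (-1) ^ blk rs i * signed_fill rs cs W i j)"
    by (rule block_row_sum[OF cs antidiagonal_supported_swap[THEN iffD2,
          OF antidiagonal_supported_signed_fill] x(2), symmetric])
  also have "\<dots> = (\<Sum>i\<in>pair_block rs ?x. W ?x i j)"
  proof (rule sum.cong)
    fix i assume "i \<in> pair_block rs ?x"
    then have "signed_fill rs cs W i j = (-1) ^ blk rs i * (-1) ^ ?x * (-1) ^ blk cs j * W ?x i j"
      using x by (simp add: pair_block_def signed_fill_def)
    moreover have "(-1) ^ ?C = ((-1) ^ ?x :: int)"
      using minus_one_power_2_diff[OF x(3)] by simp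
    ultimately show "(-1) ^ blk cs j * (-1) ^ ?C * (-1) ^ blk rs i * signed_fill rs cs W i j = W ?x i j"
      using minus_one_powers_cancel[of "blk rs i" ?x "blk cs j" "W ?x i j"] by (simp add: ac_simps)
  qed simp
  also have "\<dots> = \<beta>"
    using W[OF x(1)] x(2,3) unfolding pm_line_sums_def by simp
  finally show ?thesis .
qed

lemma complementary_skew_iff_pm_line_sums:
  assumes rs: "valid_block_sizes rs" and cs: "valid_block_sizes cs"
  shows "(\<exists>F. complementary_signs F (sign_block_mat rs cs) \<and> skew_prod F (sign_block_mat rs cs) \<and>
        skew_prod (\<lambda>j i. F i j) (sign_block_mat rs cs)\<^sup>T) \<longleftrightarrow>
   (\<exists>\<alpha> \<beta>. \<forall>x<3. \<exists>W. pm_line_sums W (pair_block rs x) (pair_block cs (2 - x)) \<alpha> \<beta>)"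
proof
  have rs6: "length rs = 6" and cs6: "length cs = 6"
    using rs cs by (simp_all add: valid_block_sizes_def)
  {
    assume "\<exists>F. complementary_signs F (sign_block_mat rs cs) \<and> skew_prod F (sign_block_mat rs cs) \<and>
        skew_prod (\<lambda>j i. F i j) (sign_block_mat rs cs)\<^sup>T"
    then obtain F where F: "complementary_signs F (sign_block_mat rs cs)"
        "skew_prod F (sign_block_mat rs cs)" "skew_prod (\<lambda>j i. F i j) (sign_block_mat cs rs)"
      by (auto simp: transpose_sign_block_mat[OF rs6 cs6])
    have supp: "antidiagonal_supported rs cs F"
      using F(1) by (simp add: complementary_signs_iff[OF rs6 cs6] antidiagonal_supported_def)
    obtain \<alpha> where \<alpha>: "\<And>i. i < sum_list rs \<Longrightarrow> signed_row_sum rs cs F i = \<alpha>"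
      using F(2) skew_prod_iff_signed_row_sum_const[OF rs cs6 supp] by auto
    obtain \<beta> where \<beta>: "\<And>j. j < sum_list cs \<Longrightarrow> signed_row_sum cs rs (\<lambda>j i. F i j) j = \<beta>"
      using F(3) skew_prod_iff_signed_row_sum_const[OF cs rs6
          antidiagonal_supported_swap[THEN iffD2, OF supp]]
      by auto
    show "\<exists>\<alpha> \<beta>. \<forall>x<3. \<exists>W. pm_line_sums W (pair_block rs x) (pair_block cs (2 - x)) \<alpha> \<beta>"
      using pm_line_sums_signed_block[OF rs6 cs6 F(1) \<alpha> \<beta>] by blast
  }
  assume "\<exists>\<alpha> \<beta>. \<forall>x<3. \<exists>W. pm_line_sums W (pair_block rs x) (pair_block cs (2 - x)) \<alpha> \<beta>"
  then obtain \<alpha> \<beta> W where W: "\<And>x. x < 3 \<Longrightarrow>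
      pm_line_sums (W x) (pair_block rs x) (pair_block cs (2 - x)) \<alpha> \<beta>"
    by metis
  have "skew_prod (signed_fill rs cs W) (sign_block_mat rs cs)"
    using skew_prod_iff_signed_row_sum_const[OF rs cs6 antidiagonal_supported_signed_fill]
      signed_row_sum_signed_fill[OF rs6 W] by blast
  moreover have "skew_prod (\<lambda>j i. signed_fill rs cs W i j) (sign_block_mat cs rs)"
    using skew_prod_iff_signed_row_sum_const[OF cs rs6
        antidiagonal_supported_swap[THEN iffD2, OF antidiagonal_supported_signed_fill]]
      signed_column_sum_signed_fill[OF cs6 W] by blast
  ultimately show "\<exists>F. complementary_signs F (sign_block_mat rs cs) \<and> skew_prod F (sign_block_mat rs cs) \<and>
      skew_prod (\<lambda>j i. F i j) (sign_block_mat rs cs)\<^sup>T"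
    using complementary_signs_signed_fill[OF rs6 cs6 W] by (auto simp: transpose_sign_block_mat[OF rs6 cs6])
qed

theorem realizable_iff_admissible_sizes:
  assumes rs: "valid_block_sizes rs" and cs: "valid_block_sizes cs"
    and zero_sums: "sign_block_mat rs cs *\<^sub>v vec (sum_list cs) (\<lambda>_. 1) = 0\<^sub>v (sum_list rs)"
      "(sign_block_mat rs cs)\<^sup>T *\<^sub>v vec (sum_list rs) (\<lambda>_. 1) = 0\<^sub>v (sum_list cs)"
  shows "realizable (sign_block_mat rs cs) \<longleftrightarrow>
    admissible_sizes (pair_size rs) (\<lambda>x. pair_size cs (2 - x))"
proof -
  have rs6: "length rs = 6" and cs6: "length cs = 6"
    using rs cs by (simp_all add: valid_block_sizes_def)
  have "realizable (sign_block_mat rs cs) \<longleftrightarrow>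
      (\<exists>\<alpha> \<beta>. \<forall>x<3. \<exists>W. pm_line_sums W (pair_block rs x) (pair_block cs (2 - x)) \<alpha> \<beta>)"
    using realizable_iff_complementary_signs[OF sign_block_mat_carrier sign_block_mat_nonzero[OF rs cs]
        sign_block_mat_values[OF rs6 cs6] zero_sums]
    by (simp add: complementary_skew_iff_pm_line_sums[OF rs cs])
  also have "\<dots> \<longleftrightarrow> (\<exists>\<alpha> \<beta>. \<forall>x<3. \<exists>W. pm_line_sums W
      {pair_start rs x..<pair_start rs x + pair_size rs x}
      {pair_start cs (2 - x)..<pair_start cs (2 - x) + pair_size cs (2 - x)} \<alpha> \<beta>)"
    using rs6 cs6 by (simp add: pair_block_eq_interval)
  also have "\<dots> \<longleftrightarrow> admissible_sizes (pair_size rs) (\<lambda>x. pair_size cs (2 - x))"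
    by (rule pm_line_sums_intervals_iff) (use rs cs in \<open>simp_all add: valid_block_sizes_def\<close>)
  finally show ?thesis .
qed

theorem theorem4p35:
  fixes a b c d e f k l p q r s :: nat
  assumes "a + b > 0" "c + d > 0" "e + f > 0" "k + l > 0" "p + q > 0" "r + s > 0"
    and "E_mat a b c d e f k l p q r s *\<^sub>v vec (a+b+c+d+e+f) (\<lambda>_. 1) = 0\<^sub>v (k+l+p+q+r+s)"
    and "transpose_mat (E_mat a b c d e f k l p q r s) *\<^sub>v vec (k+l+p+q+r+s) (\<lambda>_. 1) = 0\<^sub>v (a+b+c+d+e+f)"
  shows "realizable (E_mat a b c d e f k l p q r s) \<longleftrightarrow>
    ((even (a+b) \<and> even (c+d) \<and> even (e+f) \<and> even (k+l) \<and> even (p+q) \<and> even (r+s))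
     \<or> (((odd (a+b) \<and> odd (c+d) \<and> odd (e+f)) \<or> (odd (k+l) \<and> odd (p+q) \<and> odd (r+s))) \<and>
        of_nat (e+f) / of_nat (k+l) = (of_nat (c+d) / of_nat (p+q) :: rat) \<and>
        of_nat (c+d) / of_nat (p+q) = (of_nat (a+b) / of_nat (r+s) :: rat)))"
proof -
  define rs cs where "rs = [k, l, p, q, r, s]" and "cs = [a, b, c, d, e, f]"
  define m where "m = (\<lambda>x. pair_size cs (2 - x))"
  have sizes: "pair_size rs 0 = k + l" "pair_size rs 1 = p + q" "pair_size rs 2 = r + s"
    "m 0 = e + f" "m 1 = c + d" "m 2 = a + b"
    by (simp_all add: m_def pair_size_def rs_def cs_def)
  have E: "E_mat a b c d e f k l p q r s = sign_block_mat rs cs"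
    and dims: "sum_list rs = k + l + p + q + r + s" "sum_list cs = a + b + c + d + e + f"
    by (simp_all add: E_mat_def sign_block_mat_def rs_def cs_def add.assoc)
  have "valid_block_sizes rs" "valid_block_sizes cs"
    unfolding valid_block_sizes_def all_less_3 using assms(1-6)
    by (simp_all add: rs_def cs_def pair_size_def)
  then have "realizable (E_mat a b c d e f k l p q r s) \<longleftrightarrow> admissible_sizes (pair_size rs) m"
    unfolding E m_def by (rule realizable_iff_admissible_sizes)
      (use assms(7,8) in \<open>simp_all add: E dims\<close>)
  then show ?thesis
    unfolding admissible_sizes_def all_less_3 sizes by blast
qed

end
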